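(* Let $n$ be a positive integer, $g=3n+2$, and let $G=\{\ell_1<\dots<\ell_g\}$ be a pseudo-symmetric pure $(2n+1)$-sparse gapset of genus $g$ with multiplicity $m$. Then $G$ has depth $3$, its canonical partition is $G=G_0\cup G_1\cup G_2$ with $G_2=\{\ell_g\}$ and $\#G_1=n+1$, and moreover $\ell_{g-1}=2m-1$, $\ell_g=3m-1$, and $\alpha=g-1$, where $\alpha=\max\{i:\ell_{i+1}-\ell_i=2n+1\}$.
   Context: A gapset is a finite set $G\subset\mathbb{N}=\{1,2,\dots\}$ such that whenever $z\in G$ and $z=x+y$ with $x,y\in\mathbb{N}$, then $x\in G$ or $y\in G$; its genus is $g=\#G$. Multiplicity $m(G)=\min\{s\in\mathbb{N}:s\notin G\}$; conductor $c(G)=\min\{s\in\mathbb{N}: s+t\notin G\ \forall t\in\mathbb{N}_0\}$; Frobenius number $F(G)=c(G)-1=\ell_g$; depth $q=\lceil c(G)/m(G)\rceil$. The canonical partition is $G=G_0\cup\dots\cup G_{q-1}$ with $G_i=G\cap[im+1,(i+1)m-1]$ (so $G_0=[1,m-1]$). $G$ is pseudo-symmetric if $F(G)=2g-2$. $G$ is pure $\kappa$-sparse if $\ell_{i+1}-\ell_i\le\kappa$ for all $i$ with equality for some $i$. *)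

theory Defs
  imports Complex_Main
begin

definition gapset :: "nat set \<Rightarrow> bool" where
  "gapset G \<longleftrightarrow> finite G \<and> 0 \<notin> G \<and>
     (\<forall>z\<in>G. \<forall>x y. 0 < x \<and> 0 < y \<and> z = x + y \<longrightarrow> x \<in> G \<or> y \<in> G)"

definition genus :: "nat set \<Rightarrow> nat" where
  "genus G = card G"

definition multiplicity :: "nat set \<Rightarrow> nat" where
  "multiplicity G = (LEAST s. 1 \<le> s \<and> s \<notin> G)"

definition conductor :: "nat set \<Rightarrow> nat" where
  "conductor G = (LEAST s. 1 \<le> s \<and> (\<forall>t. s + t \<notin> G))"

definition frobenius :: "nat set \<Rightarrow> nat" where
  "frobenius G = conductor G - 1"

definition depth :: "nat set \<Rightarrow> nat" where
  "depth G = nat \<lceil>real (conductor G) / real (multiplicity G)\<rceil>"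

definition canon_part :: "nat set \<Rightarrow> nat \<Rightarrow> nat set" where
  "canon_part G i = G \<inter> {i * multiplicity G + 1 .. (i + 1) * multiplicity G - 1}"

definition ell :: "nat set \<Rightarrow> nat \<Rightarrow> nat" where
  "ell G i = sorted_list_of_set G ! (i - 1)"

definition pseudo_symmetric :: "nat set \<Rightarrow> bool" where
  "pseudo_symmetric G \<longleftrightarrow> frobenius G = 2 * genus G - 2"

definition pure_sparse :: "nat \<Rightarrow> nat set \<Rightarrow> bool" where
  "pure_sparse \<kappa> G \<longleftrightarrow>
     (\<forall>i. 1 \<le> i \<and> i < genus G \<longrightarrow> ell G (i + 1) - ell G i \<le> \<kappa>) \<and>
     (\<exists>i. 1 \<le> i \<and> i < genus G \<and> ell G (i + 1) - ell G i = \<kappa>)"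

definition alpha :: "nat \<Rightarrow> nat set \<Rightarrow> nat" where
  "alpha \<kappa> G = Max {i. 1 \<le> i \<and> i < genus G \<and> ell G (i + 1) - ell G i = \<kappa>}"

end

theory Submission
  imports Defs
begin

text \<open>
  A jump \<open>\<ell>(i+1) - \<ell>(i)\<close> between consecutive gaps never exceeds the multiplicity m, so pure
  \<open>(2n+1)\<close>-sparsity forces \<open>m \<ge> 2n+1\<close>. In a pseudo-symmetric gapset the reflection
  \<open>x \<mapsto> F - x\<close> sends every gap other than \<open>F\<close> and \<open>F/2\<close> to a non-gap; since \<open>F - \<ell>(g-1)\<close>
  would be a gap if it were below m, the last jump \<open>F - \<ell>(g-1)\<close> equals m. Sparsity bounds it by
  \<open>2n+1\<close>, hence \<open>m = 2n+1\<close>, \<open>F = 2g-2 = 3m-1\<close> and \<open>\<ell>(g-1) = 2m-1\<close>; every claim follows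
  from these three equations.
\<close>

subsection \<open>Enumerating a finite set of naturals\<close>

lemma ell_in:
  assumes "finite G" "1 \<le> i" "i \<le> card G"
  shows "ell G i \<in> G"
proof -
  have "sorted_list_of_set G ! (i - 1) \<in> set (sorted_list_of_set G)"
    using assms by (intro nth_mem) simp
  thus ?thesis using assms by (simp add: ell_def)
qed

lemma ell_strict_mono:
  assumes "finite G" "1 \<le> i" "i < j" "j \<le> card G"
  shows "ell G i < ell G j"
proof -
  have "sorted_wrt (<) (sorted_list_of_set G)" by simp
  moreover have "i - 1 < j - 1" "j - 1 < length (sorted_list_of_set G)" using assms by auto
  ultimately show ?thesis unfolding ell_def by (rule sorted_wrt_nth_less)
qed

lemma ell_mono:
  assumes "finite G" "1 \<le> i" "i \<le> j" "j \<le> card G"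
  shows "ell G i \<le> ell G j"
  using ell_strict_mono[OF assms(1,2), of j] assms by (cases "i = j") auto

lemma ex_ell_eq:
  assumes "finite G" "x \<in> G"
  obtains j where "1 \<le> j" "j \<le> card G" "ell G j = x"
proof -
  have "x \<in> set (sorted_list_of_set G)" using assms by simp
  then obtain k where "k < card G" "sorted_list_of_set G ! k = x"
    by (auto simp: in_set_conv_nth)
  thus ?thesis using that[of "k + 1"] by (simp add: ell_def)
qed

lemma ell_card_eq_Max:
  assumes "finite G" "G \<noteq> {}"
  shows "ell G (card G) = Max G"
proof (rule antisym)
  have "1 \<le> card G" using assms by (simp add: Suc_leI card_gt_0_iff)
  thus "ell G (card G) \<le> Max G" using ell_in assms by simp
  obtain j where "1 \<le> j" "j \<le> card G" "ell G j = Max G"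
    using ex_ell_eq[OF assms(1) Max_in[OF assms]] .
  thus "Max G \<le> ell G (card G)" using ell_mono[OF assms(1), of j "card G"] by simp
qed

lemma ell_Suc_le_if_greater:
  assumes "finite G" "1 \<le> i" "i < card G" "x \<in> G" "ell G i < x"
  shows "ell G (i + 1) \<le> x"
proof -
  obtain j where j: "1 \<le> j" "j \<le> card G" "ell G j = x"
    using ex_ell_eq[OF assms(1,4)] .
  have "i < j"
  proof (rule ccontr)
    assume "\<not> i < j"
    hence "ell G j \<le> ell G i" using ell_mono[OF assms(1) j(1), of i] assms by simp
    thus False using j assms by simp
  qed
  thus ?thesis using ell_mono[OF assms(1), of "i + 1" j] j by simp
qed

lemma eq_Max_if_ell_penultimate_less:
  assumes fin: "finite G" and g: "2 \<le> card G" and x: "x \<in> G" "ell G (card G - 1) < x"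
  shows "x = Max G"
proof -
  have ne: "G \<noteq> {}" using g by auto
  have "ell G (card G - 1 + 1) \<le> x"
    by (rule ell_Suc_le_if_greater[OF fin _ _ x]) (use g in auto)
  hence "Max G \<le> x" using ell_card_eq_Max[OF fin ne] g by simp
  thus ?thesis using Max_ge[OF fin x(1)] by simp
qed

subsection \<open>Gapsets and the canonical partition\<close>

lemma gapset_finite: "gapset G \<Longrightarrow> finite G"
  by (simp add: gapset_def)

lemma gapset_pos: "gapset G \<Longrightarrow> x \<in> G \<Longrightarrow> 0 < x"
  by (auto simp: gapset_def intro: gr0I)

lemma gapset_add_not_in:
  assumes "gapset G" "x \<notin> G" "y \<notin> G" "0 < x" "0 < y"
  shows "x + y \<notin> G"
  using assms unfolding gapset_def by blast

lemma conductor_eq_Max_Suc: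
  assumes "finite G" "G \<noteq> {}"
  shows "conductor G = Max G + 1"
  unfolding conductor_def
proof (rule Least_equality)
  show "1 \<le> Max G + 1 \<and> (\<forall>t. Max G + 1 + t \<notin> G)"
    using Max_ge[OF assms(1)] by fastforce
next
  fix s assume "1 \<le> s \<and> (\<forall>t. s + t \<notin> G)"
  hence "s + (Max G - s) \<notin> G" by blast
  thus "Max G + 1 \<le> s" using Max_in[OF assms] by (cases "s \<le> Max G") auto
qed

lemma frobenius_eq_Max:
  "finite G \<Longrightarrow> G \<noteq> {} \<Longrightarrow> frobenius G = Max G"
  by (simp add: frobenius_def conductor_eq_Max_Suc)

lemma
  assumes "finite G"
  shows multiplicity_pos: "0 < multiplicity G"
    and multiplicity_not_in: "multiplicity G \<notin> G"
    and less_multiplicity_in: "\<lbrakk>0 < s; s < multiplicity G\<rbrakk> \<Longrightarrow> s \<in> G"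
proof -
  have "Suc (Max (insert 0 G)) \<notin> G"
  proof
    assume "Suc (Max (insert 0 G)) \<in> G"
    hence "Suc (Max (insert 0 G)) \<le> Max (insert 0 G)" using assms by (intro Max_ge) auto
    thus False by simp
  qed
  hence "\<exists>s. 1 \<le> s \<and> s \<notin> G" by (intro exI[of _ "Suc (Max (insert 0 G))"]) simp
  then have "1 \<le> multiplicity G \<and> multiplicity G \<notin> G"
    unfolding multiplicity_def by (rule LeastI_ex)
  thus "0 < multiplicity G" "multiplicity G \<notin> G" by auto
  show "\<lbrakk>0 < s; s < multiplicity G\<rbrakk> \<Longrightarrow> s \<in> G"
    using not_less_Least[of s "\<lambda>s. 1 \<le> s \<and> s \<notin> G"] unfolding multiplicity_def by auto
qed

lemma ell_jump_le_multiplicity: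
  assumes G: "gapset G" and i: "1 \<le> i" "i < card G"
  shows "ell G (i + 1) - ell G i \<le> multiplicity G"
proof (rule ccontr)
  define m where "m = multiplicity G"
  have fin: "finite G" using gapset_finite[OF G] .
  assume "\<not> ?thesis"
  hence jump: "ell G i < ell G (i + 1) - m" unfolding m_def by simp
  have "0 < m" using multiplicity_pos[OF fin] by (simp add: m_def)
  have "ell G (i + 1) - m \<notin> G"
  proof
    assume "ell G (i + 1) - m \<in> G"
    from ell_Suc_le_if_greater[OF fin i this jump] show False using \<open>0 < m\<close> jump by linarith
  qed
  hence "ell G (i + 1) - m + m \<notin> G"
    by (rule gapset_add_not_in[OF G _ multiplicity_not_in[OF fin, folded m_def]])
      (use jump \<open>0 < m\<close> in auto)
  thus False using jump ell_in[OF fin, of "i + 1"] i by simp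
qed

lemma multiple_of_multiplicity_not_in:
  assumes "gapset G" "0 < k"
  shows "k * multiplicity G \<notin> G"
  using assms(2)
proof (induction k rule: nat_induct_non_zero)
  case 1
  show ?case using multiplicity_not_in[OF gapset_finite[OF assms(1)]] by simp
next
  case (Suc k)
  thus ?case
    using gapset_add_not_in[OF assms(1) Suc.IH multiplicity_not_in]
      multiplicity_pos gapset_finite[OF assms(1)] by (simp add: add.commute)
qed

lemma in_canon_part_div:
  assumes "gapset G" "x \<in> G"
  shows "x \<in> canon_part G (x div multiplicity G)"
proof -
  define m where "m = multiplicity G"
  have "0 < m" using multiplicity_pos[OF gapset_finite] assms by (simp add: m_def)
  have "x \<noteq> (x div m) * m"
    using multiple_of_multiplicity_not_in[OF assms(1)] gapset_pos[OF assms] assms(2)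
    by (metis m_def gr0I mult_0)
  hence "0 < x mod m" by (metis div_mult_mod_eq add_0_right gr0I)
  moreover have "x = x div m * m + x mod m" "x mod m < m" "(x div m + 1) * m = x div m * m + m"
    using \<open>0 < m\<close> by simp_all
  ultimately have "x \<in> {x div m * m + 1 .. (x div m + 1) * m - 1}"
    unfolding atLeastAtMost_iff by linarith
  thus ?thesis using assms(2) unfolding canon_part_def m_def[symmetric] by blast
qed

lemma canon_part_disjoint:
  assumes "i < j"
  shows "canon_part G i \<inter> canon_part G j = {}"
proof -
  have "(i + 1) * multiplicity G \<le> j * multiplicity G" using assms by (intro mult_le_mono1) simp
  thus ?thesis by (auto simp: canon_part_def)
qed

lemma canon_part_0:
  "finite G \<Longrightarrow> canon_part G 0 = {1..multiplicity G - 1}"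
  using less_multiplicity_in[of G] by (force simp: canon_part_def)

lemma canon_parts_cover_if_Max_less:
  assumes G: "gapset G" and F: "Max G < 3 * multiplicity G"
  shows "G = canon_part G 0 \<union> canon_part G 1 \<union> canon_part G 2"
proof -
  have "x \<in> canon_part G 0 \<union> canon_part G 1 \<union> canon_part G 2" if "x \<in> G" for x
  proof -
    have "x < 3 * multiplicity G" using Max_ge[OF gapset_finite[OF G] that] F by simp
    hence "x div multiplicity G < 3" by (rule less_mult_imp_div_less)
    hence "x div multiplicity G = 0 \<or> x div multiplicity G = 1 \<or> x div multiplicity G = 2"
      by linarith
    thus ?thesis using in_canon_part_div[OF G that] by (elim disjE) simp_all
  qed
  moreover have "canon_part G i \<subseteq> G" for i by (simp add: canon_part_def)
  ultimately show ?thesis by blast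
qed

lemma card_canon_parts_three:
  assumes "finite G" "G = canon_part G 0 \<union> canon_part G 1 \<union> canon_part G 2"
  shows "card G = card (canon_part G 0) + card (canon_part G 1) + card (canon_part G 2)"
proof -
  have finite_part: "finite (canon_part G i)" for i using assms(1) by (simp add: canon_part_def)
  have "(canon_part G 0 \<union> canon_part G 1) \<inter> canon_part G 2 = {}"
    using canon_part_disjoint[of 0 2 G] canon_part_disjoint[of 1 2 G] by auto
  moreover have "canon_part G 0 \<inter> canon_part G 1 = {}" using canon_part_disjoint[of 0 1 G] by simp
  moreover have "card G = card (canon_part G 0 \<union> canon_part G 1 \<union> canon_part G 2)"
    using arg_cong[OF assms(2), of card] .
  ultimately show ?thesis by (simp add: card_Un_disjoint finite_part)
qed

lemma canon_part_2_eq_Max: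
  assumes G: "gapset G" and m: "m = multiplicity G"
    and F: "Max G = 3 * m - 1" and e: "ell G (card G - 1) = 2 * m - 1" and g: "2 \<le> card G"
  shows "canon_part G 2 = {Max G}"
proof
  have fin: "finite G" using gapset_finite[OF G] .
  have ne: "G \<noteq> {}" using g by auto
  show "canon_part G 2 \<subseteq> {Max G}"
  proof
    fix x assume "x \<in> canon_part G 2"
    hence "x \<in> G" "ell G (card G - 1) < x" using e by (auto simp: canon_part_def m[symmetric])
    hence "x = Max G" by (rule eq_Max_if_ell_penultimate_less[OF fin g])
    thus "x \<in> {Max G}" by simp
  qed
  have "ell G (card G - 1) \<in> G" using ell_in[OF fin] g by simp
  hence "m \<noteq> 1" using e m multiplicity_not_in[OF fin] by auto
  hence "2 * m + 1 \<le> 3 * m - 1" using multiplicity_pos[OF fin] m by simp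
  thus "{Max G} \<subseteq> canon_part G 2"
    using Max_in[OF fin ne] F by (auto simp: canon_part_def m[symmetric])
qed

lemma depth_eq:
  "conductor G = q * multiplicity G \<Longrightarrow> 0 < multiplicity G \<Longrightarrow> depth G = q"
  by (simp add: depth_def)

lemma alpha_eq_last_index:
  assumes "2 \<le> genus G" "ell G (genus G) - ell G (genus G - 1) = \<kappa>"
  shows "alpha \<kappa> G = genus G - 1"
  unfolding alpha_def using assms by (intro Max_eqI) auto

lemma card_non_gaps_below_Max:
  assumes G: "gapset G" "G \<noteq> {}"
  shows "card {x. 0 < x \<and> x < Max G \<and> x \<notin> G} = Max G - card G"
proof -
  define F N where "F = Max G" and "N = {x. 0 < x \<and> x < F \<and> x \<notin> G}"
  have fin: "finite G" using gapset_finite[OF G(1)] .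
  have FG: "F \<in> G" unfolding F_def using Max_in[OF fin G(2)] .
  have "{1..<F} = N \<union> (G - {F})"
  proof (intro set_eqI iffI)
    fix x assume "x \<in> {1..<F}"
    thus "x \<in> N \<union> (G - {F})" by (auto simp: N_def)
  next
    fix x assume "x \<in> N \<union> (G - {F})"
    thus "x \<in> {1..<F}" using Max_ge[OF fin, of x] gapset_pos[OF G(1), of x]
      by (auto simp: N_def F_def)
  qed
  moreover have "finite N" unfolding N_def by (rule finite_subset[of _ "{..<F}"]) auto
  moreover have "N \<inter> (G - {F}) = {}" by (auto simp: N_def)
  ultimately have "card {1..<F} = card N + card (G - {F})"
    by (simp add: card_Un_disjoint fin)
  moreover have "0 < card G" using fin G(2) by (simp add: card_gt_0_iff)
  ultimately show ?thesis using FG fin gapset_pos[OF G(1) FG] by (simp add: N_def F_def)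
qed

subsection \<open>Pseudo-symmetric gapsets\<close>

text \<open>
  For every non-gap \<open>x < F\<close>, \<open>F - x\<close> is a gap different from \<open>F\<close> and \<open>F/2\<close>. There are \<open>g - 2\<close>
  such non-gaps and \<open>g - 2\<close> such gaps, so \<open>x \<mapsto> F - x\<close> is a bijection between them.
\<close>

lemma pseudo_symmetric_reflect:
  assumes G: "gapset G" "pseudo_symmetric G" "G \<noteq> {}"
    and y: "y \<in> G" "y \<noteq> Max G" "2 * y \<noteq> Max G"
  shows "Max G - y \<notin> G"
proof -
  define F where "F = Max G"
  have fin: "finite G" using gapset_finite[OF G(1)] .
  have FG: "F \<in> G" unfolding F_def using Max_in[OF fin G(3)] .
  have F_eq: "F = 2 * card G - 2"
    using G frobenius_eq_Max[OF fin] by (simp add: pseudo_symmetric_def genus_def F_def)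
  define N where "N = {x. 0 < x \<and> x < F \<and> x \<notin> G}"
  have card_N: "card N = card G - 2"
    using card_non_gaps_below_Max[OF G(1,3)] F_eq by (simp add: N_def F_def)
  define h where "h = F div 2"
  have "F = 2 * (card G - 1)" using F_eq by (simp add: diff_mult_distrib2)
  hence hh: "h + h = F" by (simp add: h_def)
  have "0 < h" using gapset_pos[OF G(1) FG] hh by simp
  have hG: "h \<in> G" using gapset_add_not_in[OF G(1), of h h] hh FG \<open>0 < h\<close> by blast
  have into: "(\<lambda>x. F - x) ` N \<subseteq> G - {F, h}"
  proof
    fix w assume "w \<in> (\<lambda>x. F - x) ` N"
    then obtain x where x: "0 < x" "x < F" "x \<notin> G" "w = F - x" by (auto simp: N_def)
    have "F - x \<in> G"
      using gapset_add_not_in[OF G(1) x(3), of "F - x"] x FG by auto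
    moreover have "F - x \<noteq> h"
    proof
      assume "F - x = h"
      hence "x = h" using hh x(2) by linarith
      thus False using x(3) hG by simp
    qed
    ultimately show "w \<in> G - {F, h}" using x by simp
  qed
  have "inj_on (\<lambda>x. F - x) N" by (rule inj_onI) (auto simp: N_def)
  hence "card ((\<lambda>x. F - x) ` N) = card G - 2" using card_N by (simp add: card_image)
  moreover have "card (G - {F, h}) = card G - 2"
    using FG hG hh \<open>0 < h\<close> fin by (simp add: card_Diff_subset)
  ultimately have "(\<lambda>x. F - x) ` N = G - {F, h}"
    using card_subset_eq[OF _ into] fin by simp
  moreover have "y \<in> G - {F, h}" using y hh by (auto simp: F_def)
  ultimately obtain x where "x \<in> N" "y = F - x" by (metis imageE)
  thus ?thesis by (auto simp: F_def N_def)
qed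

lemma pseudo_symmetric_last_jump:
  assumes G: "gapset G" "pseudo_symmetric G" and g: "2 \<le> card G"
    and not_half: "2 * ell G (card G - 1) \<noteq> Max G"
  shows "Max G - ell G (card G - 1) = multiplicity G"
proof -
  define e where "e = ell G (card G - 1)"
  have fin: "finite G" and ne: "G \<noteq> {}" using gapset_finite[OF G(1)] g by auto
  have eG: "e \<in> G" using ell_in[OF fin] g by (simp add: e_def)
  have "e < Max G"
    using ell_strict_mono[OF fin, of "card G - 1" "card G"] ell_card_eq_Max[OF fin ne] g
    by (simp add: e_def)
  have "Max G - e \<le> multiplicity G"
    using ell_jump_le_multiplicity[OF G(1), of "card G - 1"] ell_card_eq_Max[OF fin ne] g
    by (simp add: e_def)
  moreover have "\<not> Max G - e < multiplicity G"
  proof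
    assume "Max G - e < multiplicity G"
    hence "Max G - e \<in> G" using less_multiplicity_in[OF fin] \<open>e < Max G\<close> by simp
    moreover have "Max G - e \<noteq> Max G" "2 * (Max G - e) \<noteq> Max G"
      using gapset_pos[OF G(1) eG] not_half \<open>e < Max G\<close> by (auto simp: e_def)
    ultimately have "Max G - (Max G - e) \<notin> G" by (rule pseudo_symmetric_reflect[OF G ne])
    thus False using eG \<open>e < Max G\<close> by simp
  qed
  ultimately show ?thesis by (simp add: e_def)
qed

theorem mainTheorem13:
  fixes n :: nat and G :: "nat set"
  assumes "0 < n"
    and "gapset G"
    and "genus G = 3 * n + 2"
    and "pseudo_symmetric G"
    and "pure_sparse (2 * n + 1) G"
  shows "depth G = 3
    \<and> G = canon_part G 0 \<union> canon_part G 1 \<union> canon_part G 2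
    \<and> canon_part G 2 = {ell G (genus G)}
    \<and> card (canon_part G 1) = n + 1
    \<and> ell G (genus G - 1) = 2 * multiplicity G - 1
    \<and> ell G (genus G) = 3 * multiplicity G - 1
    \<and> alpha (2 * n + 1) G = genus G - 1"
proof -
  have fin: "finite G" using gapset_finite[OF assms(2)] .
  have g: "card G = 3 * n + 2" using assms(3) by (simp add: genus_def)
  hence ne: "G \<noteq> {}" by auto
  have F: "Max G = 6 * n + 2"
    using assms(4) frobenius_eq_Max[OF fin ne] g by (simp add: pseudo_symmetric_def genus_def)
  define m e where "m = multiplicity G" and "e = ell G (card G - 1)"
  obtain i where "1 \<le> i" "i < card G" "ell G (i + 1) - ell G i = 2 * n + 1"
    using assms(5) by (auto simp: pure_sparse_def genus_def)
  hence "2 * n + 1 \<le> m" using ell_jump_le_multiplicity[OF assms(2)] by (metis m_def)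
  have "Max G - e \<le> 2 * n + 1"
    using assms(5) g ell_card_eq_Max[OF fin ne] by (auto simp: pure_sparse_def genus_def e_def)
  hence "Max G - e = m"
    using pseudo_symmetric_last_jump[OF assms(2,4)] g F \<open>0 < n\<close> by (simp add: e_def m_def)
  hence m: "m = 2 * n + 1" and e: "e = 2 * m - 1" and F_m: "Max G = 3 * m - 1"
    using \<open>2 * n + 1 \<le> m\<close> \<open>Max G - e \<le> 2 * n + 1\<close> F by auto
  have last: "ell G (genus G) = Max G" using ell_card_eq_Max[OF fin ne] by (simp add: genus_def)
  have partition: "G = canon_part G 0 \<union> canon_part G 1 \<union> canon_part G 2"
    using canon_parts_cover_if_Max_less[OF assms(2)] F_m m by (simp add: m_def)
  have part_2: "canon_part G 2 = {Max G}"
    by (rule canon_part_2_eq_Max[OF assms(2) m_def F_m e[unfolded e_def]]) (use g in simp)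
  have "card (canon_part G 1) = n + 1"
    using card_canon_parts_three[OF fin partition] canon_part_0[OF fin] part_2 g m
    by (simp add: m_def)
  moreover have "depth G = 3"
    using depth_eq[of G 3] conductor_eq_Max_Suc[OF fin ne] F_m m by (simp add: m_def)
  moreover have "alpha (2 * n + 1) G = genus G - 1"
    using alpha_eq_last_index[of G] last \<open>Max G - e = m\<close> m g by (simp add: genus_def e_def)
  moreover have "ell G (genus G - 1) = 2 * multiplicity G - 1"
    using e by (simp add: genus_def e_def m_def)
  ultimately show ?thesis
    using partition part_2 last F_m by (simp add: m_def)
qed

end
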